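(* Let $P\in\mathbb{C}[z_1,\dots,z_d]$. Then for every integer $s\ge1$, \[ \|P^s\|_a\ge\|P\|_a^s . \]
   Context: For multi-indices $\alpha\in\mathbb{N}^d$ write $z^\alpha=z_1^{\alpha_1}\cdots z_d^{\alpha_d}$ and $\alpha!=\alpha_1!\cdots\alpha_d!$. The apolar inner product on $\mathbb{C}[z_1,\dots,z_d]$ is $\langle \sum c_\alpha z^\alpha,\sum d_\alpha z^\alpha\rangle_a=\sum_\alpha\alpha!\,c_\alpha\overline{d_\alpha}$, with norm $\|P\|_a=\sqrt{\langle P,P\rangle_a}$. *)

theory Defs
  imports "HOL-Analysis.Analysis" "HOL-Library.Poly_Mapping"
begin

text \<open>Multivariate complex polynomials: finitely supported maps from multi-indices
  (finitely supported exponent vectors nat =>0 nat; variable z_(i+1) has index i)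
  to coefficients. Multiplication is the convolution product of Poly_Mapping.\<close>

type_synonym cpoly = "(nat \<Rightarrow>\<^sub>0 nat) \<Rightarrow>\<^sub>0 complex"

definition in_vars :: "nat \<Rightarrow> cpoly \<Rightarrow> bool" where
  "in_vars d P \<longleftrightarrow> (\<forall>\<alpha>\<in>Poly_Mapping.keys P. Poly_Mapping.keys \<alpha> \<subseteq> {..<d})"

definition mfact :: "(nat \<Rightarrow>\<^sub>0 nat) \<Rightarrow> real" where
  "mfact \<alpha> = (\<Prod>i\<in>Poly_Mapping.keys \<alpha>. fact (Poly_Mapping.lookup \<alpha> i))"

definition apolar_inner :: "cpoly \<Rightarrow> cpoly \<Rightarrow> complex" where
  "apolar_inner P Q = (\<Sum>\<alpha>\<in>Poly_Mapping.keys P \<union> Poly_Mapping.keys Q.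
      complex_of_real (mfact \<alpha>) * Poly_Mapping.lookup P \<alpha> * cnj (Poly_Mapping.lookup Q \<alpha>))"

definition apolar_norm :: "cpoly \<Rightarrow> real" where
  "apolar_norm P = sqrt (Re (apolar_inner P P))"

end

theory Submission
  imports Defs "HOL-Probability.Distributions"
begin

text \<open>The apolar norm is an L2 norm. Put z_i = sqrt(t_i) w^(k_i), where the t_i are independent
  standard exponential variables, w is a primitive K-th root of unity and the k_i are uniform in
  {0..K-1}. If K exceeds every exponent occurring, averaging over the roots of unity makes distinct
  monomials orthogonal, while E |z^alpha|^2 = prod E t_i^(alpha_i) = alpha!; hence
  <F, G>_a = E F(z) conj(G(z)). Therefore ||P^s||_a^2 = E (|P(z)|^2)^s >= (E |P(z)|^2)^s = ||P||_a^(2s)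
  by Jensen's inequality for x |-> x^s.\<close>

section \<open>Evaluation of polynomials\<close>

definition monomial_eval :: "nat \<Rightarrow> (nat \<Rightarrow>\<^sub>0 nat) \<Rightarrow> (nat \<Rightarrow> complex) \<Rightarrow> complex" where
  "monomial_eval d \<alpha> z = (\<Prod>i<d. z i ^ Poly_Mapping.lookup \<alpha> i)"

definition cpoly_eval :: "nat \<Rightarrow> cpoly \<Rightarrow> (nat \<Rightarrow> complex) \<Rightarrow> complex" where
  "cpoly_eval d F z = (\<Sum>\<alpha>\<in>Poly_Mapping.keys F. Poly_Mapping.lookup F \<alpha> * monomial_eval d \<alpha> z)"

lemma cpoly_eval_superset:
  assumes "finite S" "Poly_Mapping.keys F \<subseteq> S"
  shows "cpoly_eval d F z = (\<Sum>\<alpha>\<in>S. Poly_Mapping.lookup F \<alpha> * monomial_eval d \<alpha> z)"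
  unfolding cpoly_eval_def
  by (rule sum.mono_neutral_left) (use assms in \<open>auto simp: in_keys_iff\<close>)

lemma monomial_eval_add: "monomial_eval d (\<alpha> + \<beta>) z = monomial_eval d \<alpha> z * monomial_eval d \<beta> z"
  by (simp add: monomial_eval_def lookup_add power_add prod.distrib)

lemma cpoly_eval_zero [simp]: "cpoly_eval d 0 z = 0"
  by (simp add: cpoly_eval_def)

lemma cpoly_eval_one [simp]: "cpoly_eval d 1 z = 1"
  by (simp add: cpoly_eval_def monomial_eval_def)

lemma cpoly_eval_single: "cpoly_eval d (Poly_Mapping.single \<alpha> c) z = c * monomial_eval d \<alpha> z"
  by (simp add: cpoly_eval_def)

lemma cpoly_eval_add: "cpoly_eval d (F + G) z = cpoly_eval d F z + cpoly_eval d G z"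
proof -
  let ?S = "Poly_Mapping.keys F \<union> Poly_Mapping.keys G"
  have "cpoly_eval d (F + G) z = (\<Sum>\<alpha>\<in>?S. Poly_Mapping.lookup (F + G) \<alpha> * monomial_eval d \<alpha> z)"
    by (rule cpoly_eval_superset) (auto simp: keys_add)
  also have "\<dots> = (\<Sum>\<alpha>\<in>?S. Poly_Mapping.lookup F \<alpha> * monomial_eval d \<alpha> z)
                 + (\<Sum>\<alpha>\<in>?S. Poly_Mapping.lookup G \<alpha> * monomial_eval d \<alpha> z)"
    by (simp add: lookup_add distrib_right sum.distrib)
  also have "\<dots> = cpoly_eval d F z + cpoly_eval d G z"
    by (subst (1 2) cpoly_eval_superset[of ?S]) auto
  finally show ?thesis .
qed

lemma cpoly_eval_sum: "finite A \<Longrightarrow> cpoly_eval d (\<Sum>a\<in>A. F a) z = (\<Sum>a\<in>A. cpoly_eval d (F a) z)"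
  by (induction A rule: finite_induct) (auto simp: cpoly_eval_add)

lemma poly_mapping_sum_single_lookup:
  "F = (\<Sum>\<alpha>\<in>Poly_Mapping.keys F. Poly_Mapping.single \<alpha> (Poly_Mapping.lookup F \<alpha>))"
  by (rule poly_mapping_eqI) (simp add: lookup_sum lookup_single when_def in_keys_iff)

lemma cpoly_eval_mult: "cpoly_eval d (F * G) z = cpoly_eval d F z * cpoly_eval d G z"
proof -
  let ?A = "Poly_Mapping.keys F" and ?B = "Poly_Mapping.keys G"
  have "F * G = (\<Sum>a\<in>?A. \<Sum>b\<in>?B.
      Poly_Mapping.single (a + b) (Poly_Mapping.lookup F a * Poly_Mapping.lookup G b))"
    by (subst (1) poly_mapping_sum_single_lookup, subst (2) poly_mapping_sum_single_lookup)
       (simp add: sum_product mult_single)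
  then have "cpoly_eval d (F * G) z = (\<Sum>a\<in>?A. \<Sum>b\<in>?B.
      Poly_Mapping.lookup F a * Poly_Mapping.lookup G b * monomial_eval d (a + b) z)"
    by (simp add: cpoly_eval_sum cpoly_eval_single)
  also have "\<dots> = cpoly_eval d F z * cpoly_eval d G z"
    by (simp add: cpoly_eval_def sum_product monomial_eval_add mult_ac)
  finally show ?thesis .
qed

lemma cpoly_eval_mult_cnj:
  "cpoly_eval d F z * cnj (cpoly_eval d G z)
     = (\<Sum>\<alpha>\<in>Poly_Mapping.keys F. \<Sum>\<beta>\<in>Poly_Mapping.keys G.
          Poly_Mapping.lookup F \<alpha> * cnj (Poly_Mapping.lookup G \<beta>) * (monomial_eval d \<alpha> z * cnj (monomial_eval d \<beta> z)))"
  unfolding cpoly_eval_def cnj_sum sum_product by (simp add: mult_ac)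

lemma cpoly_eval_power: "cpoly_eval d (F ^ n) z = cpoly_eval d F z ^ n"
  by (induction n) (simp_all add: cpoly_eval_mult)

lemma in_vars_mult:
  assumes "in_vars d F" "in_vars d G"
  shows "in_vars d (F * G)"
  unfolding in_vars_def
proof
  fix \<gamma> assume "\<gamma> \<in> Poly_Mapping.keys (F * G)"
  then obtain a b where "\<gamma> = a + b" "a \<in> Poly_Mapping.keys F" "b \<in> Poly_Mapping.keys G"
    using keys_mult[of F G] by blast
  then show "Poly_Mapping.keys \<gamma> \<subseteq> {..<d}"
    using assms keys_add[of a b] unfolding in_vars_def by blast
qed

lemma in_vars_one: "in_vars d 1"
  by (simp add: in_vars_def)

lemma in_vars_power: "in_vars d F \<Longrightarrow> in_vars d (F ^ n)"
  by (induction n) (simp_all add: in_vars_one in_vars_mult)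

section \<open>Averaging over roots of unity\<close>

lemma sum_cis_powers_int_multiple:
  fixes n :: int
  assumes K: "K > 0" and n: "\<bar>n\<bar> < int K"
  shows "(\<Sum>j<K. cis (2 * pi * n / K) ^ j) = (if n = 0 then of_nat K else 0)"
proof (cases "n = 0")
  case False
  define q where "q = cis (2 * pi * n / K)"
  have qK: "q ^ K = 1"
    unfolding q_def Complex.DeMoivre using K by simp
  have "q \<noteq> 1"
  proof
    assume "q = 1"
    then have "cos (2 * pi * n / K) = 1"
      by (simp add: q_def complex_eq_iff)
    then obtain m :: int where "2 * pi * n / K = of_int m * 2 * pi"
      by (auto simp: cos_one_2pi_int)
    then have "real_of_int n = real_of_int (m * int K)"
      using K by (simp add: field_simps)
    then have "n = m * int K"
      by linarith
    with False n show False
      by (cases "m = 0") (auto simp: abs_mult)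
  qed
  with qK False show ?thesis
    by (simp add: q_def[symmetric] sum_gp_strict)
qed simp

lemma sum_roots_power_mult_cnj_power:
  fixes r :: real
  assumes K: "K > 0" and "a < K" "b < K"
  shows "(\<Sum>j<K. (of_real r * cis (2 * pi / K) ^ j) ^ a * cnj (of_real r * cis (2 * pi / K) ^ j) ^ b)
       = (if a = b then of_nat K * of_real (r ^ (2 * a)) else 0)"
proof -
  define \<theta> where "\<theta> = 2 * pi / K"
  define n :: int where "n = int a - int b"
  have summand: "(of_real r * cis \<theta> ^ j) ^ a * cnj (of_real r * cis \<theta> ^ j) ^ b
      = of_real (r ^ (a + b)) * cis (2 * pi * n / K) ^ j" for j
  proof -
    have angle: "2 * pi * n / K = (real a - real b) * \<theta>"
      by (simp add: n_def \<theta>_def)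
    have "(of_real r * cis \<theta> ^ j) ^ a = of_real (r ^ a) * cis (real j * real a * \<theta>)"
      by (simp add: power_mult_distrib Complex.DeMoivre mult_ac)
    moreover have "cnj (of_real r * cis \<theta> ^ j) ^ b = of_real (r ^ b) * cis (- (real j * real b * \<theta>))"
      by (simp add: power_mult_distrib Complex.DeMoivre cis_cnj mult_ac)
    moreover have "cis (2 * pi * n / K) ^ j = cis (real j * real a * \<theta>) * cis (- (real j * real b * \<theta>))"
      unfolding Complex.DeMoivre angle cis_mult by (simp add: algebra_simps)
    ultimately show ?thesis
      by (simp add: power_add mult_ac)
  qed
  have "\<bar>n\<bar> < int K"
    using assms by (simp add: n_def)
  have "(\<Sum>j<K. (of_real r * cis (2 * pi / K) ^ j) ^ a * cnj (of_real r * cis (2 * pi / K) ^ j) ^ b)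
      = (\<Sum>j<K. of_real (r ^ (a + b)) * cis (2 * pi * n / K) ^ j)"
    by (simp only: \<theta>_def[symmetric] summand)
  also have "\<dots> = of_real (r ^ (a + b)) * (if n = 0 then of_nat K else 0)"
    using \<open>\<bar>n\<bar> < int K\<close> by (simp add: sum_distrib_left[symmetric] sum_cis_powers_int_multiple[OF K])
  also have "\<dots> = (if a = b then of_nat K * of_real (r ^ (2 * a)) else 0)"
    by (simp add: n_def mult_2)
  finally show ?thesis .
qed

text \<open>On t \<ge> 0, where the exponential measure lives, the absolute values are vacuous; they make
  cmod (sample_point K k t i) squared equal to the factor abs (t i) of radial_monomial everywhere.\<close>

definition sample_point :: "nat \<Rightarrow> (nat \<Rightarrow> nat) \<Rightarrow> (nat \<Rightarrow> real) \<Rightarrow> nat \<Rightarrow> complex" where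
  "sample_point K k t i = of_real (sqrt \<bar>t i\<bar>) * cis (2 * pi / K) ^ k i"

definition radial_monomial :: "nat \<Rightarrow> (nat \<Rightarrow>\<^sub>0 nat) \<Rightarrow> (nat \<Rightarrow> real) \<Rightarrow> complex" where
  "radial_monomial d \<alpha> t = (\<Prod>i<d. of_real (\<bar>t i\<bar> ^ Poly_Mapping.lookup \<alpha> i))"

definition exponents_below :: "nat \<Rightarrow> nat \<Rightarrow> cpoly \<Rightarrow> bool" where
  "exponents_below d K F \<longleftrightarrow> (\<forall>\<alpha>\<in>Poly_Mapping.keys F. \<forall>i<d. Poly_Mapping.lookup \<alpha> i < K)"

lemma ex_exponents_below: "\<exists>K>0. exponents_below d K F \<and> exponents_below d K G"
proof -
  let ?U = "Poly_Mapping.keys F \<union> Poly_Mapping.keys G"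
  define K where "K = Suc (\<Sum>\<alpha>\<in>?U. \<Sum>i<d. Poly_Mapping.lookup \<alpha> i)"
  have "Poly_Mapping.lookup \<alpha> i < K" if "\<alpha> \<in> ?U" "i < d" for \<alpha> i
  proof -
    have "Poly_Mapping.lookup \<alpha> i \<le> (\<Sum>i<d. Poly_Mapping.lookup \<alpha> i)"
      using that by (intro member_le_sum) auto
    also have "\<dots> \<le> (\<Sum>\<alpha>\<in>?U. \<Sum>i<d. Poly_Mapping.lookup \<alpha> i)"
      using that by (intro member_le_sum) auto
    finally show ?thesis
      by (simp add: K_def)
  qed
  then show ?thesis
    unfolding exponents_below_def by (intro exI[of _ K]) (simp add: K_def)
qed

lemma sum_sample_monomial_mult_cnj:
  assumes K: "K > 0"
    and keys: "Poly_Mapping.keys \<alpha> \<subseteq> {..<d}" "Poly_Mapping.keys \<beta> \<subseteq> {..<d}"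
    and below: "\<And>i. i < d \<Longrightarrow> Poly_Mapping.lookup \<alpha> i < K \<and> Poly_Mapping.lookup \<beta> i < K"
  shows "(\<Sum>k\<in>PiE {..<d} (\<lambda>_. {..<K}).
            monomial_eval d \<alpha> (sample_point K k t) * cnj (monomial_eval d \<beta> (sample_point K k t)))
       = (if \<alpha> = \<beta> then of_nat K ^ d * radial_monomial d \<alpha> t else 0)"
proof -
  define g where "g i j = (of_real (sqrt \<bar>t i\<bar>) * cis (2 * pi / K) ^ j) ^ Poly_Mapping.lookup \<alpha> i
     * cnj (of_real (sqrt \<bar>t i\<bar>) * cis (2 * pi / K) ^ j) ^ Poly_Mapping.lookup \<beta> i" for i j
  have factor: "(\<Sum>j<K. g i j) = (if Poly_Mapping.lookup \<alpha> i = Poly_Mapping.lookup \<beta> i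
      then of_nat K * of_real (\<bar>t i\<bar> ^ Poly_Mapping.lookup \<alpha> i) else 0)" if "i < d" for i
  proof -
    have "(\<Sum>j<K. g i j) = (if Poly_Mapping.lookup \<alpha> i = Poly_Mapping.lookup \<beta> i
        then of_nat K * of_real (sqrt \<bar>t i\<bar> ^ (2 * Poly_Mapping.lookup \<alpha> i)) else 0)"
      unfolding g_def using below[OF that] by (intro sum_roots_power_mult_cnj_power K) auto
    then show ?thesis
      by (simp add: power_mult)
  qed
  have "(\<Sum>k\<in>PiE {..<d} (\<lambda>_. {..<K}).
            monomial_eval d \<alpha> (sample_point K k t) * cnj (monomial_eval d \<beta> (sample_point K k t)))
      = (\<Sum>k\<in>PiE {..<d} (\<lambda>_. {..<K}). \<Prod>i<d. g i (k i))"
    unfolding monomial_eval_def g_def sample_point_def cnj_prod complex_cnj_power prod.distrib ..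
  also have "\<dots> = (\<Prod>i<d. \<Sum>j<K. g i j)"
    by (rule prod_sum_PiE[symmetric]) auto
  also have "\<dots> = (if \<alpha> = \<beta> then of_nat K ^ d * radial_monomial d \<alpha> t else 0)"
  proof (cases "\<alpha> = \<beta>")
    case True
    then show ?thesis
      by (simp add: factor radial_monomial_def prod.distrib)
  next
    case False
    have "\<exists>i<d. Poly_Mapping.lookup \<alpha> i \<noteq> Poly_Mapping.lookup \<beta> i"
    proof (rule ccontr)
      assume "\<not> ?thesis"
      moreover have "Poly_Mapping.lookup \<alpha> i = 0 \<and> Poly_Mapping.lookup \<beta> i = 0" if "\<not> i < d" for i
        using keys that by (auto simp: in_keys_iff)
      ultimately have "Poly_Mapping.lookup \<alpha> i = Poly_Mapping.lookup \<beta> i" for i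
        by metis
      with False show False
        by (simp add: poly_mapping_eqI)
    qed
    with False show ?thesis
      by (auto simp: factor intro: prod_zero)
  qed
  finally show ?thesis .
qed

lemma sum_sample_eval_mult_cnj:
  assumes K: "K > 0" and F: "in_vars d F" "exponents_below d K F"
    and G: "in_vars d G" "exponents_below d K G"
  shows "(\<Sum>k\<in>PiE {..<d} (\<lambda>_. {..<K}). cpoly_eval d F (sample_point K k t) * cnj (cpoly_eval d G (sample_point K k t)))
     = of_nat K ^ d * (\<Sum>\<alpha>\<in>Poly_Mapping.keys F \<inter> Poly_Mapping.keys G.
          Poly_Mapping.lookup F \<alpha> * cnj (Poly_Mapping.lookup G \<alpha>) * radial_monomial d \<alpha> t)"
proof -
  let ?A = "Poly_Mapping.keys F" and ?B = "Poly_Mapping.keys G" and ?KS = "PiE {..<d} (\<lambda>_. {..<K})"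
  define c where "c \<alpha> \<beta> = Poly_Mapping.lookup F \<alpha> * cnj (Poly_Mapping.lookup G \<beta>)" for \<alpha> \<beta>
  define m where "m \<alpha> \<beta> = (\<Sum>k\<in>?KS. monomial_eval d \<alpha> (sample_point K k t) * cnj (monomial_eval d \<beta> (sample_point K k t)))" for \<alpha> \<beta>
  have "(\<Sum>k\<in>?KS. cpoly_eval d F (sample_point K k t) * cnj (cpoly_eval d G (sample_point K k t)))
      = (\<Sum>\<alpha>\<in>?A. \<Sum>\<beta>\<in>?B. c \<alpha> \<beta> * m \<alpha> \<beta>)"
  proof -
    have "(\<Sum>k\<in>?KS. cpoly_eval d F (sample_point K k t) * cnj (cpoly_eval d G (sample_point K k t)))
        = (\<Sum>k\<in>?KS. \<Sum>\<alpha>\<in>?A. \<Sum>\<beta>\<in>?B. c \<alpha> \<beta> *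
             (monomial_eval d \<alpha> (sample_point K k t) * cnj (monomial_eval d \<beta> (sample_point K k t))))"
      unfolding cpoly_eval_mult_cnj c_def ..
    also have "\<dots> = (\<Sum>\<alpha>\<in>?A. \<Sum>k\<in>?KS. \<Sum>\<beta>\<in>?B. c \<alpha> \<beta> *
             (monomial_eval d \<alpha> (sample_point K k t) * cnj (monomial_eval d \<beta> (sample_point K k t))))"
      by (rule sum.swap)
    also have "\<dots> = (\<Sum>\<alpha>\<in>?A. \<Sum>\<beta>\<in>?B. \<Sum>k\<in>?KS. c \<alpha> \<beta> *
             (monomial_eval d \<alpha> (sample_point K k t) * cnj (monomial_eval d \<beta> (sample_point K k t))))"
      by (intro sum.cong refl sum.swap)
    finally show ?thesis
      unfolding m_def sum_distrib_left .
  qed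
  also have "\<dots> = (\<Sum>\<alpha>\<in>?A. \<Sum>\<beta>\<in>?B. if \<alpha> = \<beta> then c \<alpha> \<alpha> * (of_nat K ^ d * radial_monomial d \<alpha> t) else 0)"
  proof (intro sum.cong refl)
    fix \<alpha> \<beta> assume "\<alpha> \<in> ?A" "\<beta> \<in> ?B"
    with F G have "m \<alpha> \<beta> = (if \<alpha> = \<beta> then of_nat K ^ d * radial_monomial d \<alpha> t else 0)"
      unfolding m_def in_vars_def exponents_below_def by (intro sum_sample_monomial_mult_cnj K) auto
    then show "c \<alpha> \<beta> * m \<alpha> \<beta> = (if \<alpha> = \<beta> then c \<alpha> \<alpha> * (of_nat K ^ d * radial_monomial d \<alpha> t) else 0)"
      by simp
  qed
  also have "\<dots> = (\<Sum>\<alpha>\<in>?A \<inter> ?B. c \<alpha> \<alpha> * (of_nat K ^ d * radial_monomial d \<alpha> t))"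
    by (simp add: sum.inter_restrict)
  also have "\<dots> = of_nat K ^ d * (\<Sum>\<alpha>\<in>?A \<inter> ?B.
          Poly_Mapping.lookup F \<alpha> * cnj (Poly_Mapping.lookup G \<alpha>) * radial_monomial d \<alpha> t)"
    unfolding c_def sum_distrib_left by (intro sum.cong refl) (simp add: mult_ac)
  finally show ?thesis .
qed

section \<open>The radial measure\<close>

definition exponential_measure :: "real measure" where
  "exponential_measure = density lborel (exponential_density 1)"

definition radial_measure :: "nat \<Rightarrow> (nat \<Rightarrow> real) measure" where
  "radial_measure d = PiM {..<d} (\<lambda>_. exponential_measure)"

lemma prob_space_exponential_measure: "prob_space exponential_measure"
  unfolding exponential_measure_def by (rule prob_space_exponential_density) simp

lemma prob_space_radial_measure: "prob_space (radial_measure d)"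
  unfolding radial_measure_def by (rule prob_space_PiM) (rule prob_space_exponential_measure)

lemma has_bochner_integral_exponential_abs_power:
  "has_bochner_integral exponential_measure (\<lambda>x. \<bar>x\<bar> ^ n) (fact n)"
proof (rule has_bochner_integral_nn_integral)
  show "(\<lambda>x. \<bar>x\<bar> ^ n) \<in> borel_measurable exponential_measure"
    unfolding exponential_measure_def by measurable
  have "(\<integral>\<^sup>+ x. ennreal (\<bar>x\<bar> ^ n) \<partial>exponential_measure)
      = (\<integral>\<^sup>+ x. ennreal (exponential_density 1 x) * ennreal (\<bar>x\<bar> ^ n) \<partial>lborel)"
    unfolding exponential_measure_def by (rule nn_integral_density) measurable
  also have "\<dots> = (\<integral>\<^sup>+ x. ennreal (exponential_density 1 x * x ^ n) \<partial>lborel)"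
    by (rule nn_integral_cong) (auto simp: erlang_density_def ennreal_mult[symmetric])
  also have "\<dots> = ennreal (fact n)"
    using nn_integral_erlang_ith_moment[of 1 0 n] by simp
  finally show "(\<integral>\<^sup>+ x. ennreal (\<bar>x\<bar> ^ n) \<partial>exponential_measure) = ennreal (fact n)" .
qed simp_all

lemma has_bochner_integral_radial_monomial:
  assumes "Poly_Mapping.keys \<alpha> \<subseteq> {..<d}"
  shows "has_bochner_integral (radial_measure d) (radial_monomial d \<alpha>) (of_real (mfact \<alpha>))"
proof -
  interpret product_sigma_finite "\<lambda>_::nat. exponential_measure"
    using prob_space_exponential_measure
    by (simp add: product_sigma_finite_def prob_space_imp_sigma_finite)
  have moment: "integrable exponential_measure (\<lambda>x. complex_of_real (\<bar>x\<bar> ^ n))"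
    "integral\<^sup>L exponential_measure (\<lambda>x. complex_of_real (\<bar>x\<bar> ^ n)) = of_real (fact n)" for n
    using has_bochner_integral_exponential_abs_power[of n]
    by (simp_all add: has_bochner_integral_iff del: of_real_power)
  have "integrable (radial_measure d) (radial_monomial d \<alpha>)"
    unfolding radial_measure_def radial_monomial_def[abs_def]
    by (rule product_integrable_prod) (simp_all only: finite_lessThan moment)
  moreover have "integral\<^sup>L (radial_measure d) (radial_monomial d \<alpha>)
      = of_real (\<Prod>i<d. fact (Poly_Mapping.lookup \<alpha> i))"
    unfolding radial_measure_def radial_monomial_def[abs_def]
    by (subst product_integral_prod) (simp_all only: finite_lessThan moment of_real_prod)
  moreover have "(\<Prod>i<d. fact (Poly_Mapping.lookup \<alpha> i)) = mfact \<alpha>"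
    unfolding mfact_def
    by (rule prod.mono_neutral_right) (use assms in \<open>auto simp: in_keys_iff\<close>)
  ultimately show ?thesis
    by (simp add: has_bochner_integral_iff)
qed

lemma apolar_inner_keys_inter:
  "apolar_inner F G = (\<Sum>\<alpha>\<in>Poly_Mapping.keys F \<inter> Poly_Mapping.keys G.
      of_real (mfact \<alpha>) * Poly_Mapping.lookup F \<alpha> * cnj (Poly_Mapping.lookup G \<alpha>))"
  unfolding apolar_inner_def
  by (rule sum.mono_neutral_right) (auto simp: in_keys_iff)

lemma has_bochner_integral_sum_sample_eval_mult_cnj:
  assumes K: "K > 0" and F: "in_vars d F" "exponents_below d K F"
    and G: "in_vars d G" "exponents_below d K G"
  shows "has_bochner_integral (radial_measure d)
    (\<lambda>t. \<Sum>k\<in>PiE {..<d} (\<lambda>_. {..<K}). cpoly_eval d F (sample_point K k t) * cnj (cpoly_eval d G (sample_point K k t)))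
    (of_nat K ^ d * apolar_inner F G)"
proof -
  define c where "c \<alpha> = Poly_Mapping.lookup F \<alpha> * cnj (Poly_Mapping.lookup G \<alpha>)" for \<alpha>
  have monomial: "has_bochner_integral (radial_measure d) (\<lambda>t. c \<alpha> * radial_monomial d \<alpha> t) (c \<alpha> * of_real (mfact \<alpha>))"
    if "\<alpha> \<in> Poly_Mapping.keys F" for \<alpha>
    using F(1) that unfolding in_vars_def
    by (intro has_bochner_integral_mult_right has_bochner_integral_radial_monomial) auto
  have "has_bochner_integral (radial_measure d)
      (\<lambda>t. of_nat K ^ d * (\<Sum>\<alpha>\<in>Poly_Mapping.keys F \<inter> Poly_Mapping.keys G. c \<alpha> * radial_monomial d \<alpha> t))
      (of_nat K ^ d * (\<Sum>\<alpha>\<in>Poly_Mapping.keys F \<inter> Poly_Mapping.keys G. c \<alpha> * of_real (mfact \<alpha>)))"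
    by (rule has_bochner_integral_mult_right, rule has_bochner_integral_sum, rule monomial) auto
  moreover have "(\<Sum>\<alpha>\<in>Poly_Mapping.keys F \<inter> Poly_Mapping.keys G. c \<alpha> * of_real (mfact \<alpha>)) = apolar_inner F G"
    unfolding apolar_inner_keys_inter c_def by (intro sum.cong refl) (simp add: mult_ac)
  ultimately show ?thesis
    unfolding sum_sample_eval_mult_cnj[OF assms] c_def by simp
qed

lemma apolar_inner_self:
  "apolar_inner F F = of_real (\<Sum>\<alpha>\<in>Poly_Mapping.keys F. mfact \<alpha> * (cmod (Poly_Mapping.lookup F \<alpha>))\<^sup>2)"
  unfolding apolar_inner_def of_real_sum of_real_mult complex_norm_square by (simp add: mult.assoc)

lemma apolar_inner_self_nonneg: "0 \<le> Re (apolar_inner F F)"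
proof -
  have "0 \<le> mfact \<alpha>" for \<alpha>
    unfolding mfact_def by (intro prod_nonneg) simp
  then show ?thesis
    unfolding apolar_inner_self by (simp add: sum_nonneg)
qed

lemma apolar_norm_power2: "apolar_norm F ^ 2 = Re (apolar_inner F F)"
  by (simp add: apolar_norm_def apolar_inner_self_nonneg)

lemma has_bochner_integral_sum_sample_norm_eval_sq:
  assumes "K > 0" "in_vars d F" "exponents_below d K F"
  shows "has_bochner_integral (radial_measure d)
    (\<lambda>t. \<Sum>k\<in>PiE {..<d} (\<lambda>_. {..<K}). (cmod (cpoly_eval d F (sample_point K k t)))\<^sup>2)
    (real K ^ d * apolar_norm F ^ 2)"
  using has_bochner_integral_Re[OF has_bochner_integral_sum_sample_eval_mult_cnj[OF assms assms(2,3)]]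
  by (simp add: apolar_norm_power2 complex_norm_square[symmetric] del: of_real_power)

section \<open>Jensen's inequality for powers\<close>

lemma power_ge_tangent:
  fixes x m :: real
  assumes x: "0 \<le> x" and m: "0 \<le> m"
  shows "m ^ n + real n * m ^ (n - 1) * (x - m) \<le> x ^ n"
proof (cases n)
  case (Suc k)
  have "m ^ Suc k + real (Suc k) * m ^ k * (x - m) \<le> x ^ Suc k"
  proof (induction k)
    case (Suc k)
    have "x * (m ^ Suc k + real (Suc k) * m ^ k * (x - m))
        - (m ^ Suc (Suc k) + real (Suc (Suc k)) * m ^ Suc k * (x - m))
        = real (Suc k) * m ^ k * (x - m)\<^sup>2"
      by (simp add: algebra_simps power2_eq_square)
    moreover have "0 \<le> real (Suc k) * m ^ k * (x - m)\<^sup>2"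
      using m by simp
    moreover have "x * (m ^ Suc k + real (Suc k) * m ^ k * (x - m)) \<le> x * x ^ Suc k"
      using Suc x by (rule mult_left_mono)
    ultimately show ?case
      by simp
  qed simp
  then show ?thesis
    using Suc by simp
qed simp

text \<open>Integrate the tangent line of x |-> x^s at the mean value m of (sum over I of f k) / card I.\<close>

lemma (in prob_space) power_expectation_sum_le:
  fixes f :: "'i \<Rightarrow> 'a \<Rightarrow> real"
  assumes I: "finite I" and nonneg: "\<And>k x. 0 \<le> f k x"
    and int: "integrable M (\<lambda>x. \<Sum>k\<in>I. f k x)" "integrable M (\<lambda>x. \<Sum>k\<in>I. f k x ^ s)"
  shows "real (card I) * (expectation (\<lambda>x. \<Sum>k\<in>I. f k x) / card I) ^ s
       \<le> expectation (\<lambda>x. \<Sum>k\<in>I. f k x ^ s)"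
proof (cases "I = {}")
  case False
  define m where "m = expectation (\<lambda>x. \<Sum>k\<in>I. f k x) / card I"
  define b where "b = real s * m ^ (s - 1)"
  have "0 \<le> m"
    unfolding m_def using nonneg by (simp add: integral_nonneg_AE sum_nonneg)
  have tangent: "card I * m ^ s + b * ((\<Sum>k\<in>I. f k x) - card I * m) \<le> (\<Sum>k\<in>I. f k x ^ s)" for x
  proof -
    have "(\<Sum>k\<in>I. m ^ s + b * (f k x - m)) \<le> (\<Sum>k\<in>I. f k x ^ s)"
      unfolding b_def by (intro sum_mono power_ge_tangent nonneg \<open>0 \<le> m\<close>)
    moreover have "(\<Sum>k\<in>I. b * (f k x - m)) = b * ((\<Sum>k\<in>I. f k x) - card I * m)"
      by (simp add: sum_distrib_left[symmetric] sum_subtractf)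
    ultimately show ?thesis
      by (simp add: sum.distrib)
  qed
  have "card I * m ^ s = expectation (\<lambda>x. card I * m ^ s + b * ((\<Sum>k\<in>I. f k x) - card I * m))"
    using int(1) I False by (simp add: m_def prob_space)
  also have "\<dots> \<le> expectation (\<lambda>x. \<Sum>k\<in>I. f k x ^ s)"
    by (rule integral_mono) (use int tangent in auto)
  finally show ?thesis
    unfolding m_def .
qed simp

theorem theorem5p1:
  fixes P :: cpoly and d s :: nat
  assumes "in_vars d P" and "s \<ge> 1"
  shows "apolar_norm (P ^ s) \<ge> apolar_norm P ^ s"
proof -
  obtain K where K: "K > 0" "exponents_below d K P" "exponents_below d K (P ^ s)"
    using ex_exponents_below by blast
  define f where "f k t = (cmod (cpoly_eval d P (sample_point K k t)))\<^sup>2" for k t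
  let ?KS = "PiE {..<d} (\<lambda>_. {..<K})"
  have P: "has_bochner_integral (radial_measure d) (\<lambda>t. \<Sum>k\<in>?KS. f k t) (real K ^ d * apolar_norm P ^ 2)"
    unfolding f_def using K assms(1) by (intro has_bochner_integral_sum_sample_norm_eval_sq)
  have Ps: "has_bochner_integral (radial_measure d) (\<lambda>t. \<Sum>k\<in>?KS. f k t ^ s)
      (real K ^ d * apolar_norm (P ^ s) ^ 2)"
    using has_bochner_integral_sum_sample_norm_eval_sq[OF K(1) in_vars_power[OF assms(1)] K(3)]
    by (simp add: f_def cpoly_eval_power norm_power power_mult[symmetric] mult.commute)
  interpret prob_space "radial_measure d"
    by (rule prob_space_radial_measure)
  have "real K ^ d * (apolar_norm P ^ 2) ^ s \<le> real K ^ d * apolar_norm (P ^ s) ^ 2"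
    using power_expectation_sum_le[of ?KS f s] P Ps K(1)
    by (simp add: has_bochner_integral_iff card_PiE finite_PiE f_def)
  then have "(apolar_norm P ^ s) ^ 2 \<le> apolar_norm (P ^ s) ^ 2"
    using K(1) by (simp add: power_mult[symmetric] mult.commute)
  then show ?thesis
    by (rule power2_le_imp_le) (simp add: apolar_norm_def apolar_inner_self_nonneg)
qed

end
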